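(* Linear $\mathrm{HTA}_\pm$ are strictly less expressive than two-way linear $\mathrm{HTA}_\pm$: every set of $\Sigma$-trees recognised by a linear $\mathrm{HTA}_\pm$ is recognised by some two-way linear $\mathrm{HTA}_\pm$, but some set of $\Sigma$-trees recognised by a two-way linear $\mathrm{HTA}_\pm$ is not recognised by any linear $\mathrm{HTA}_\pm$.
   Context: Fix a finite set $AP$, $\Sigma=2^{AP}$; $\Sigma$-trees are unranked (finitely many children per node), unordered, leafless trees labelled by $\Sigma$. A two-way $\mathrm{HTA}_\pm$ is $\langle Q,\Sigma,\delta,q_I,F\rangle$, $Q$ finite, $q_I\in Q$, $F\subseteq Q$, $\delta:Q\times\Sigma\times\{\mathit{root},\mathit{nonroot}\}\to\mathcal{B}^+(\{\Diamond_k,\Box_k\}_{k\in\mathbb{N}}\times Q\cup\{\Uparrow\}\times Q)$ (positive Boolean formulae built with $\top,\bot,\land,\lor$; $\Diamond=\Diamond_1,\Box=\Box_1$). A run on $t$ from $s$: tree $r$ labelled in $Q\times\mathrm{Dom}(t)$ with root $(q_I,s)$, each node $x$ labelled $(q,v)$ satisfying $\delta(q,t(v),\rho)$ ($\rho=\mathit{root}$ iff $v$ is the root), where $x\models(\Diamond_k,q')$ iff $x$ has children labelled $(q',v_i)$ for $k$ pairwise distinct children $v_i$ of $v$; $x\models(\Box_k,q')$ iff for all but at most $k-1$ children $v'$ of $v$ some child of $x$ is labelled $(q',v')$; $x\models(\Uparrow,q')$ iff some child of $x$ is labelled $(q',v')$ with $v'$ the parent of $v$. Accepting: every infinite path of $r$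 from its root visits $F$ infinitely often. Recognised language: trees with an accepting run from the root. Hesitant: $Q$ partitioned into totally ordered nonempty components such that transitions from $Q_i$ mention only states in components $Q_j$, $j\le i$, each component being transient (no $Q_i$-atoms in transitions of its states), existential ($Q_i$-atoms only of form $(\Diamond,q')$, at most one per DNF clause), universal (only $(\Box,q')$, at most one per CNF clause), or upward (a singleton $\{q\}$ where $q$ occurs in its own transitions only as $(\Uparrow,q)$). Polarised: existential-component states not in $F$, universal-component states in $F$. Linear: all components are singletons. A (one-way) linear $\mathrm{HTA}_\pm$ is the special case with no atoms $(\Uparrow,q)$ and with $\delta$ not depending on the $\mathit{root}/\mathit{nonroot}$ argument (equivalently $\delta:Q\times\Sigma\to\mathcal{B}^+(\{\Diamond_k,\Box_k\}_{k\in\mathbb{N}}\times Q)$), with components of types transient, existential or universal only. *)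

theory Defs
  imports Main
begin

datatype 'q hatom = Dia nat 'q | Box nat 'q | Up 'q

fun atom_state :: "'q hatom \<Rightarrow> 'q" where
  "atom_state (Dia k q) = q"
| "atom_state (Box k q) = q"
| "atom_state (Up q) = q"

fun is_up :: "'q hatom \<Rightarrow> bool" where
  "is_up (Up q) = True"
| "is_up _ = False"

datatype 'a pbf = PTrue | PFalse | PAtom 'a | PAnd "'a pbf" "'a pbf" | POr "'a pbf" "'a pbf"

fun pbf_atoms :: "'a pbf \<Rightarrow> 'a set" where
  "pbf_atoms PTrue = {}"
| "pbf_atoms PFalse = {}"
| "pbf_atoms (PAtom a) = {a}"
| "pbf_atoms (PAnd f g) = pbf_atoms f \<union> pbf_atoms g"
| "pbf_atoms (POr f g) = pbf_atoms f \<union> pbf_atoms g"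

fun pbf_sat :: "('a \<Rightarrow> bool) \<Rightarrow> 'a pbf \<Rightarrow> bool" where
  "pbf_sat I PTrue = True"
| "pbf_sat I PFalse = False"
| "pbf_sat I (PAtom a) = I a"
| "pbf_sat I (PAnd f g) = (pbf_sat I f \<and> pbf_sat I g)"
| "pbf_sat I (POr f g) = (pbf_sat I f \<or> pbf_sat I g)"

fun dnf :: "'a pbf \<Rightarrow> 'a list list" where
  "dnf PTrue = [[]]"
| "dnf PFalse = []"
| "dnf (PAtom a) = [[a]]"
| "dnf (POr f g) = dnf f @ dnf g"
| "dnf (PAnd f g) = [c @ d. c \<leftarrow> dnf f, d \<leftarrow> dnf g]"

fun cnf :: "'a pbf \<Rightarrow> 'a list list" where
  "cnf PTrue = []"
| "cnf PFalse = [[]]"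
| "cnf (PAtom a) = [[a]]"
| "cnf (PAnd f g) = cnf f @ cnf g"
| "cnf (POr f g) = [c @ d. c \<leftarrow> cnf f, d \<leftarrow> cnf g]"

text \<open>A tree has domain a set of nat lists (root = []), labels in 2^AP = 'ap set.\<close>
record 'ap tree =
  tdom :: "nat list set"
  tlab :: "nat list \<Rightarrow> 'ap set"

definition children :: "nat list set \<Rightarrow> nat list \<Rightarrow> nat list set" where
  "children D v = {w. w \<in> D \<and> (\<exists>i. w = v @ [i])}"

text \<open>Unranked (finitely many children), leafless trees; canonical representation.\<close>
definition is_tree :: "'ap tree \<Rightarrow> bool" where
  "is_tree t \<longleftrightarrow>
     [] \<in> tdom t \<and>
     (\<forall>v i. v @ [i] \<in> tdom t \<longrightarrow> v \<in> tdom t) \<and>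
     (\<forall>v \<in> tdom t. \<exists>n > 0. \<forall>i. v @ [i] \<in> tdom t \<longleftrightarrow> i < n) \<and>
     (\<forall>v. v \<notin> tdom t \<longrightarrow> tlab t v = {})"

record 'ap hta =
  hstates :: "nat set"
  hdelta :: "nat \<Rightarrow> 'ap set \<Rightarrow> bool \<Rightarrow> nat hatom pbf"  \<comment> \<open>bool: True iff root\<close>
  hinit :: nat
  hacc :: "nat set"

text \<open>Satisfaction of an atom at a run node reading tree node v, where M is the set of
  labels of the run node's children.\<close>
fun sat_atom :: "'ap tree \<Rightarrow> nat list \<Rightarrow> (nat \<times> nat list) set \<Rightarrow> nat hatom \<Rightarrow> bool" where
  "sat_atom t v M (Dia k q') =
     (\<exists>S \<subseteq> children (tdom t) v. finite S \<and> card S = k \<and> (\<forall>w \<in> S. (q', w) \<in> M))"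
| "sat_atom t v M (Box k q') =
     (card {w \<in> children (tdom t) v. (q', w) \<notin> M} < k)"
| "sat_atom t v M (Up q') = (v \<noteq> [] \<and> (q', butlast v) \<in> M)"

definition accepting_run ::
  "'ap hta \<Rightarrow> 'ap tree \<Rightarrow> nat list \<Rightarrow> nat list set \<Rightarrow> (nat list \<Rightarrow> nat \<times> nat list) \<Rightarrow> bool" where
  "accepting_run A t s R \<rho> \<longleftrightarrow>
     [] \<in> R \<and> (\<forall>x i. x @ [i] \<in> R \<longrightarrow> x \<in> R) \<and>
     \<rho> [] = (hinit A, s) \<and>
     (\<forall>x \<in> R. fst (\<rho> x) \<in> hstates A \<and> snd (\<rho> x) \<in> tdom t \<and>
        pbf_sat (sat_atom t (snd (\<rho> x)) (\<rho> ` children R x))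
          (hdelta A (fst (\<rho> x)) (tlab t (snd (\<rho> x))) (snd (\<rho> x) = []))) \<and>
     (\<forall>\<pi>. \<pi> 0 = [] \<and> (\<forall>n. \<pi> (Suc n) \<in> children R (\<pi> n)) \<longrightarrow>
        (\<exists>\<^sub>\<infinity>n. fst (\<rho> (\<pi> n)) \<in> hacc A))"

definition lang :: "'ap hta \<Rightarrow> 'ap tree set" where
  "lang A = {t. is_tree t \<and> (\<exists>R \<rho>. accepting_run A t [] R \<rho>)}"

definition hta_wf :: "'ap hta \<Rightarrow> bool" where
  "hta_wf A \<longleftrightarrow> finite (hstates A) \<and> hinit A \<in> hstates A \<and> hacc A \<subseteq> hstates A \<and>
     (\<forall>q \<in> hstates A. \<forall>\<sigma> b. atom_state ` pbf_atoms (hdelta A q \<sigma> b) \<subseteq> hstates A)"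

text \<open>Singleton components, totally ordered by an injective rank; transitions only go down.\<close>
definition linear_order_ok :: "'ap hta \<Rightarrow> bool" where
  "linear_order_ok A \<longleftrightarrow> (\<exists>rk :: nat \<Rightarrow> nat. inj_on rk (hstates A) \<and>
     (\<forall>q \<in> hstates A. \<forall>\<sigma> b. \<forall>a \<in> pbf_atoms (hdelta A q \<sigma> b). rk (atom_state a) \<le> rk q))"

definition occ :: "nat \<Rightarrow> nat hatom pbf \<Rightarrow> nat hatom set" where
  "occ q f = {a \<in> pbf_atoms f. atom_state a = q}"

definition transient_st :: "'ap hta \<Rightarrow> nat \<Rightarrow> bool" where
  "transient_st A q \<longleftrightarrow> (\<forall>\<sigma> b. occ q (hdelta A q \<sigma> b) = {})"

definition existential_st :: "'ap hta \<Rightarrow> nat \<Rightarrow> bool" where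
  "existential_st A q \<longleftrightarrow> (\<forall>\<sigma> b. occ q (hdelta A q \<sigma> b) \<subseteq> {Dia 1 q} \<and>
     (\<forall>c \<in> set (dnf (hdelta A q \<sigma> b)). length (filter (\<lambda>a. atom_state a = q) c) \<le> 1))"

definition universal_st :: "'ap hta \<Rightarrow> nat \<Rightarrow> bool" where
  "universal_st A q \<longleftrightarrow> (\<forall>\<sigma> b. occ q (hdelta A q \<sigma> b) \<subseteq> {Box 1 q} \<and>
     (\<forall>c \<in> set (cnf (hdelta A q \<sigma> b)). length (filter (\<lambda>a. atom_state a = q) c) \<le> 1))"

definition upward_st :: "'ap hta \<Rightarrow> nat \<Rightarrow> bool" where
  "upward_st A q \<longleftrightarrow> (\<forall>\<sigma> b. occ q (hdelta A q \<sigma> b) \<subseteq> {Up q})"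

text \<open>Two-way linear HTA_pm: hesitant, polarised, all components singletons.\<close>
definition two_way_linear :: "'ap hta \<Rightarrow> bool" where
  "two_way_linear A \<longleftrightarrow> hta_wf A \<and> linear_order_ok A \<and>
     (\<forall>q \<in> hstates A. transient_st A q \<or> (existential_st A q \<and> q \<notin> hacc A) \<or>
        (universal_st A q \<and> q \<in> hacc A) \<or> upward_st A q)"

definition one_way_linear :: "'ap hta \<Rightarrow> bool" where
  "one_way_linear A \<longleftrightarrow> hta_wf A \<and> linear_order_ok A \<and>
     (\<forall>q \<in> hstates A. \<forall>\<sigma>. hdelta A q \<sigma> True = hdelta A q \<sigma> False) \<and>
     (\<forall>q \<in> hstates A. \<forall>\<sigma> b. \<forall>a \<in> pbf_atoms (hdelta A q \<sigma> b). \<not> is_up a) \<and>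
     (\<forall>q \<in> hstates A. transient_st A q \<or> (existential_st A q \<and> q \<notin> hacc A) \<or>
        (universal_st A q \<and> q \<in> hacc A))"

end

theory Submission
  imports Defs "HOL-Library.Countable"
begin

text \<open>
  Two-way linear automata include the one-way ones, so only strictness needs an argument.
  The witnesses are the trees \<^term>\<open>tree_of_shape (Mid x False g)\<close>, in which every node has
  four or five children and a path from the root along which the labels alternate can reach a
  node with five children if and only if x. A two-way linear automaton can guess such a path and
  check each alternation by moving back up to the parent, so it tells x apart.

  A one-way automaton accepts a subtree from a state independently of what lies outside it, so on
  these trees acceptance becomes a recurrence in the height: each state sees its children
  through the automaton's lower states and through at most one self-loop atom, \<open>\<Diamond>q\<close> or
  \<open>\<box>q\<close>. Once the lower states have stabilised, this recurrence makes the acceptance of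
  \<^term>\<open>Mid x s j\<close> independent of x and of j three levels further up. By induction along the
  order of the singleton components, every state eventually ignores x, so no one-way linear
  automaton can tell \<^term>\<open>Mid True False g\<close> from \<^term>\<open>Mid False False g\<close> for large g.
\<close>

lemma pbf_sat_mono: "pbf_sat I f \<Longrightarrow> (\<And>a. a \<in> pbf_atoms f \<Longrightarrow> I a \<Longrightarrow> J a) \<Longrightarrow> pbf_sat J f"
  by (induction f) auto

lemma pbf_sat_cong: "(\<And>a. a \<in> pbf_atoms f \<Longrightarrow> I a = J a) \<Longrightarrow> pbf_sat I f = pbf_sat J f"
  by (induction f) auto

lemma sat_atom_children_image:
  assumes "children (tdom t) v = f ` I" and "inj_on f I"
  shows "sat_atom t v M (Dia k p) \<longleftrightarrow> (\<exists>S \<subseteq> I. finite S \<and> card S = k \<and> (\<forall>i\<in>S. (p, f i) \<in> M))"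
    and "sat_atom t v M (Box k p) \<longleftrightarrow> card {i \<in> I. (p, f i) \<notin> M} < k"
proof -
  have inj: "inj_on f S" if "S \<subseteq> I" for S
    using assms(2) that by (rule inj_on_subset)
  show "sat_atom t v M (Dia k p) \<longleftrightarrow> (\<exists>S \<subseteq> I. finite S \<and> card S = k \<and> (\<forall>i\<in>S. (p, f i) \<in> M))"
  proof
    assume "sat_atom t v M (Dia k p)"
    then obtain S' where "S' \<subseteq> f ` I" "finite S'" "card S' = k" "\<forall>w\<in>S'. (p, w) \<in> M"
      using assms(1) by auto
    moreover obtain S where "S \<subseteq> I" "S' = f ` S"
      using \<open>S' \<subseteq> f ` I\<close> by (auto simp: subset_image_iff)
    ultimately show "\<exists>S \<subseteq> I. finite S \<and> card S = k \<and> (\<forall>i\<in>S. (p, f i) \<in> M)"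
      using inj by (auto simp: finite_image_iff card_image)
  next
    assume "\<exists>S \<subseteq> I. finite S \<and> card S = k \<and> (\<forall>i\<in>S. (p, f i) \<in> M)"
    then obtain S where "S \<subseteq> I" "finite S" "card S = k" "\<forall>i\<in>S. (p, f i) \<in> M"
      by blast
    then show "sat_atom t v M (Dia k p)"
      using assms(1) inj by (auto intro!: exI[of _ "f ` S"] simp: card_image)
  qed
  have "{w \<in> children (tdom t) v. (p, w) \<notin> M} = f ` {i \<in> I. (p, f i) \<notin> M}"
    using assms(1) by auto
  then show "sat_atom t v M (Box k p) \<longleftrightarrow> card {i \<in> I. (p, f i) \<notin> M} < k"
    using inj by (simp add: card_image)
qed

lemma sat_atom_mono:
  assumes "finite (children (tdom t) v)" and "M \<subseteq> M'" and "sat_atom t v M a"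
  shows "sat_atom t v M' a"
proof (cases a)
  case (Box k p)
  have "card {w \<in> children (tdom t) v. (p, w) \<notin> M'} \<le> card {w \<in> children (tdom t) v. (p, w) \<notin> M}"
    using assms(1,2) by (intro card_mono) auto
  then show ?thesis
    using assms(3) Box by simp
qed (use assms in auto)

definition subtree :: "'ap tree \<Rightarrow> nat list \<Rightarrow> 'ap tree" where
  "subtree t v = \<lparr>tdom = {u. v @ u \<in> tdom t}, tlab = (\<lambda>u. tlab t (v @ u))\<rparr>"

lemma subtree_Nil [simp]: "subtree t [] = t"
  by (simp add: subtree_def)

lemma children_append: "children (tdom t) (v @ u) = (@) v ` children (tdom (subtree t v)) u"
  by (auto simp: children_def subtree_def)

lemma sat_atom_subtree:
  assumes "\<not> is_up a"
  shows "sat_atom t (v @ u) M a = sat_atom (subtree t v) u {(p, z). (p, v @ z) \<in> M} a"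
proof -
  let ?C = "children (tdom (subtree t v)) u"
  have "inj_on ((@) v) ?C" "inj_on id ?C" "?C = id ` ?C"
    by (auto simp: inj_on_def)
  note lhs = sat_atom_children_image[OF children_append this(1)]
    and rhs = sat_atom_children_image[OF this(3,2)]
  show ?thesis
    using assms
    by (cases a)
      (simp_all only: lhs rhs mem_Collect_eq case_prod_conv id_apply is_up.simps not_True_eq_False)
qed

section \<open>Acceptance from a configuration\<close>

lemma INFM_Suc_iff: "(\<exists>\<^sub>\<infinity>n. P (Suc n)) \<longleftrightarrow> (\<exists>\<^sub>\<infinity>n. P n)"
  unfolding frequently_def cofinite_eq_sequentially
  using eventually_sequentially_Suc[of "\<lambda>n. \<not> P n"] by simp

definition accepts_from :: "'ap hta \<Rightarrow> nat \<Rightarrow> 'ap tree \<Rightarrow> nat list \<Rightarrow> bool" where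
  "accepts_from A q t v \<longleftrightarrow> (\<exists>R \<rho>. accepting_run (A\<lparr>hinit := q\<rparr>) t v R \<rho>)"

lemma lang_accepts_from: "lang A = {t. is_tree t \<and> accepts_from A (hinit A) t []}"
  by (simp add: lang_def accepts_from_def)

lemma accepts_fromD:
  assumes "accepts_from A q t v"
  shows "q \<in> hstates A" and "v \<in> tdom t"
  using assms by (auto simp: accepts_from_def accepting_run_def)

lemma accepting_runD:
  assumes "accepting_run A t s R \<rho>"
  shows "[] \<in> R" and "\<rho> [] = (hinit A, s)" and "x @ [i] \<in> R \<Longrightarrow> x \<in> R"
    and "x \<in> R \<Longrightarrow> fst (\<rho> x) \<in> hstates A" and "x \<in> R \<Longrightarrow> snd (\<rho> x) \<in> tdom t"
    and "x \<in> R \<Longrightarrow> pbf_sat (sat_atom t (snd (\<rho> x)) (\<rho> ` children R x))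
          (hdelta A (fst (\<rho> x)) (tlab t (snd (\<rho> x))) (snd (\<rho> x) = []))"
    and "\<pi> 0 = [] \<Longrightarrow> (\<And>k. \<pi> (Suc k) \<in> children R (\<pi> k)) \<Longrightarrow> \<exists>\<^sub>\<infinity>k. fst (\<rho> (\<pi> k)) \<in> hacc A"
  using assms unfolding accepting_run_def by blast+

lemma accepting_run_Cons:
  assumes run: "accepting_run A t s R \<rho>" and n: "[n] \<in> R"
  shows "accepting_run (A\<lparr>hinit := fst (\<rho> [n])\<rparr>) t (snd (\<rho> [n])) {w. n # w \<in> R} (\<lambda>w. \<rho> (n # w))"
  unfolding accepting_run_def
proof (intro conjI)
  show "\<forall>x i. x @ [i] \<in> {w. n # w \<in> R} \<longrightarrow> x \<in> {w. n # w \<in> R}"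
    using run unfolding accepting_run_def by (metis append_Cons mem_Collect_eq)
  have "(\<lambda>w. \<rho> (n # w)) ` children {w. n # w \<in> R} w = \<rho> ` children R (n # w)" for w
    by (auto simp: children_def image_iff)
  then show "\<forall>w\<in>{w. n # w \<in> R}. fst (\<rho> (n # w)) \<in> hstates (A\<lparr>hinit := fst (\<rho> [n])\<rparr>) \<and>
      snd (\<rho> (n # w)) \<in> tdom t \<and>
      pbf_sat (sat_atom t (snd (\<rho> (n # w))) ((\<lambda>w. \<rho> (n # w)) ` children {w. n # w \<in> R} w))
        (hdelta (A\<lparr>hinit := fst (\<rho> [n])\<rparr>) (fst (\<rho> (n # w))) (tlab t (snd (\<rho> (n # w))))
          (snd (\<rho> (n # w)) = []))"
    using run unfolding accepting_run_def by simp
  show "\<forall>\<pi>. \<pi> 0 = [] \<and> (\<forall>k. \<pi> (Suc k) \<in> children {w. n # w \<in> R} (\<pi> k)) \<longrightarrow>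
      (\<exists>\<^sub>\<infinity>k. fst (\<rho> (n # \<pi> k)) \<in> hacc (A\<lparr>hinit := fst (\<rho> [n])\<rparr>))"
  proof (intro allI impI)
    fix \<pi> assume \<pi>: "\<pi> 0 = [] \<and> (\<forall>k. \<pi> (Suc k) \<in> children {w. n # w \<in> R} (\<pi> k))"
    define \<pi>' where "\<pi>' k = (case k of 0 \<Rightarrow> [] | Suc k \<Rightarrow> n # \<pi> k)" for k
    have "\<pi>' 0 = [] \<and> (\<forall>k. \<pi>' (Suc k) \<in> children R (\<pi>' k))"
      using \<pi> n by (auto simp: \<pi>'_def children_def split: nat.split)
    then have "\<exists>\<^sub>\<infinity>k. fst (\<rho> (\<pi>' k)) \<in> hacc A"
      using run unfolding accepting_run_def by blast
    then have "\<exists>\<^sub>\<infinity>k. fst (\<rho> (\<pi>' (Suc k))) \<in> hacc A"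
      by (rule INFM_Suc_iff[THEN iffD2])
    then show "\<exists>\<^sub>\<infinity>k. fst (\<rho> (n # \<pi> k)) \<in> hacc (A\<lparr>hinit := fst (\<rho> [n])\<rparr>)"
      by (simp add: \<pi>'_def)
  qed
qed (use n in auto)

lemma run_path_Cons:
  assumes "\<pi> 0 = []" and path: "\<forall>k. \<pi> (Suc k) \<in> children R (\<pi> k)"
  shows "\<pi> (Suc k) = hd (\<pi> 1) # tl (\<pi> (Suc k))"
    and "tl (\<pi> (Suc (Suc k))) \<in> children {w. hd (\<pi> 1) # w \<in> R} (tl (\<pi> (Suc k)))"
proof -
  have step: "\<exists>i. \<pi> (Suc k) = \<pi> k @ [i]" "\<pi> (Suc k) \<in> R" for k
    using path by (auto simp: children_def)
  show Cons: "\<pi> (Suc k) = hd (\<pi> 1) # tl (\<pi> (Suc k))" for k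
  proof (induction k)
    case 0
    show ?case
      using step(1)[of 0] \<open>\<pi> 0 = []\<close> by auto
  next
    case (Suc k)
    obtain i where "\<pi> (Suc (Suc k)) = \<pi> (Suc k) @ [i]"
      using step(1) by blast
    then show ?case
      using Suc.IH by (metis Cons_eq_appendI list.sel(1,3))
  qed
  obtain i where "\<pi> (Suc (Suc k)) = \<pi> (Suc k) @ [i]"
    using step(1) by blast
  then have "tl (\<pi> (Suc (Suc k))) = tl (\<pi> (Suc k)) @ [i]"
    using Cons[of k] by (metis append_Cons list.sel(3))
  then show "tl (\<pi> (Suc (Suc k))) \<in> children {w. hd (\<pi> 1) # w \<in> R} (tl (\<pi> (Suc k)))"
    using Cons[of "Suc k"] step(2)[of "Suc k"] unfolding children_def by auto
qed

text \<open>
  Run trees are indexed by lists of naturals, so the run for the configuration m is hung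
  below the root at the index \<^term>\<open>to_nat m\<close>.
\<close>

definition graft :: "(nat \<times> nat list) set \<Rightarrow> (nat \<times> nat list \<Rightarrow> nat list set) \<Rightarrow> nat list set" where
  "graft M Rs = insert [] {to_nat m # w | m w. m \<in> M \<and> w \<in> Rs m}"

definition graft_labels :: "'a \<Rightarrow> (nat \<times> nat list \<Rightarrow> nat list \<Rightarrow> 'a) \<Rightarrow> nat list \<Rightarrow> 'a" where
  "graft_labels c \<rho>s w = (case w of [] \<Rightarrow> c | n # w \<Rightarrow> \<rho>s (from_nat n) w)"

lemma Cons_in_graft: "n # w \<in> graft M Rs \<longleftrightarrow> n \<in> to_nat ` M \<and> w \<in> Rs (from_nat n)"
  unfolding graft_def by auto

lemma graft_labels_simps [simp]:
  "graft_labels c \<rho>s [] = c" "graft_labels c \<rho>s (n # w) = \<rho>s (from_nat n) w"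
  by (simp_all add: graft_labels_def)

lemma graft_accepting:
  assumes runs: "\<And>m. m \<in> M \<Longrightarrow> accepting_run (A\<lparr>hinit := fst m\<rparr>) t (snd m) (Rs m) (\<rho>s m)"
    and \<pi>: "\<pi> 0 = []" "\<forall>k. \<pi> (Suc k) \<in> children (graft M Rs) (\<pi> k)"
  shows "\<exists>\<^sub>\<infinity>k. fst (graft_labels c \<rho>s (\<pi> k)) \<in> hacc A"
proof -
  define n where "n = hd (\<pi> 1)"
  define \<pi>' where "\<pi>' k = tl (\<pi> (Suc k))" for k
  have "\<pi> 1 \<in> children (graft M Rs) []"
    using \<pi> by (metis One_nat_def)
  then have n: "[n] \<in> graft M Rs" and "\<pi>' 0 = []"
    using run_path_Cons(1)[OF \<pi>, of 0] by (auto simp: n_def \<pi>'_def children_def)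
  then have m: "from_nat n \<in> M"
    by (auto simp: Cons_in_graft)
  moreover have "\<pi>' (Suc k) \<in> children (Rs (from_nat n)) (\<pi>' k)" for k
    using run_path_Cons(2)[OF \<pi>, of k] n by (simp add: Cons_in_graft n_def \<pi>'_def)
  moreover note \<open>\<pi>' 0 = []\<close>
  ultimately have "\<exists>\<^sub>\<infinity>k. fst (\<rho>s (from_nat n) (\<pi>' k)) \<in> hacc A"
    using accepting_runD(7)[OF runs[OF m]] by simp
  moreover have "\<pi> (Suc k) = n # \<pi>' k" for k
    unfolding n_def \<pi>'_def by (rule run_path_Cons(1)[OF \<pi>])
  ultimately have "\<exists>\<^sub>\<infinity>k. fst (graft_labels c \<rho>s (\<pi> (Suc k))) \<in> hacc A"
    by simp
  then show ?thesis
    by (rule INFM_Suc_iff[THEN iffD1])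
qed

lemma accepting_run_graft:
  assumes runs: "\<And>m. m \<in> M \<Longrightarrow> accepting_run (A\<lparr>hinit := fst m\<rparr>) t (snd m) (Rs m) (\<rho>s m)"
    and q: "q \<in> hstates A" and v: "v \<in> tdom t"
    and sat: "pbf_sat (sat_atom t v M) (hdelta A q (tlab t v) (v = []))"
  shows "accepting_run (A\<lparr>hinit := q\<rparr>) t v (graft M Rs) (graft_labels (q, v) \<rho>s)"
proof -
  let ?R = "graft M Rs" and ?\<rho> = "graft_labels (q, v) \<rho>s"
  have from_nat_in: "from_nat n \<in> M" if "n \<in> to_nat ` M" for n
    using that by auto
  have runs_root: "[] \<in> Rs m" "\<rho>s m [] = m" if "m \<in> M" for m
    using accepting_runD(1,2)[OF runs[OF that]] by simp_all
  have root: "?\<rho> ` children ?R [] = M"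
  proof -
    have "[n] \<in> ?R \<longleftrightarrow> n \<in> to_nat ` M" for n
      using Cons_in_graft runs_root(1) from_nat_in by blast
    then have "children ?R [] = (\<lambda>m. [to_nat m]) ` M"
      unfolding children_def by auto
    then show ?thesis
      using runs_root(2) by (simp add: image_image)
  qed
  have below_root: "fst (?\<rho> (n # w)) \<in> hstates A \<and> snd (?\<rho> (n # w)) \<in> tdom t \<and>
      pbf_sat (sat_atom t (snd (?\<rho> (n # w))) (?\<rho> ` children ?R (n # w)))
        (hdelta A (fst (?\<rho> (n # w))) (tlab t (snd (?\<rho> (n # w)))) (snd (?\<rho> (n # w)) = []))"
    if "n # w \<in> ?R" for n w
  proof -
    have "children ?R (n # w) = (#) n ` children (Rs (from_nat n)) w"
      using that unfolding children_def by (auto simp: Cons_in_graft)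
    then have "?\<rho> ` children ?R (n # w) = \<rho>s (from_nat n) ` children (Rs (from_nat n)) w"
      by (simp add: image_image)
    then show ?thesis
      using that accepting_runD(4-6)[OF runs[of "from_nat n"], of w] from_nat_in
      by (simp add: Cons_in_graft)
  qed
  have prefix_closed: "x \<in> ?R" if "x @ [i] \<in> ?R" for x i
  proof (cases x)
    case (Cons n w)
    then show ?thesis
      using that accepting_runD(3)[OF runs[of "from_nat n"], of w i] from_nat_in
      by (simp add: Cons_in_graft)
  qed (simp add: graft_def)
  have "fst (?\<rho> x) \<in> hstates A \<and> snd (?\<rho> x) \<in> tdom t \<and>
      pbf_sat (sat_atom t (snd (?\<rho> x)) (?\<rho> ` children ?R x))
        (hdelta A (fst (?\<rho> x)) (tlab t (snd (?\<rho> x))) (snd (?\<rho> x) = []))" if "x \<in> ?R" for x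
    using that q v sat root below_root by (cases x) simp_all
  then show ?thesis
    unfolding accepting_run_def
    using graft_accepting[OF runs] prefix_closed by (simp add: graft_def)
qed

lemma accepts_from_intro:
  assumes "q \<in> hstates A" and "v \<in> tdom t"
    and "pbf_sat (sat_atom t v M) (hdelta A q (tlab t v) (v = []))"
    and M: "\<And>p w. (p, w) \<in> M \<Longrightarrow> accepts_from A p t w"
  shows "accepts_from A q t v"
proof -
  have "\<forall>m \<in> M. \<exists>R\<rho>. accepting_run (A\<lparr>hinit := fst m\<rparr>) t (snd m) (fst R\<rho>) (snd R\<rho>)"
    using M unfolding accepts_from_def by fastforce
  from bchoice[OF this] obtain f
    where "\<forall>m \<in> M. accepting_run (A\<lparr>hinit := fst m\<rparr>) t (snd m) (fst (f m)) (snd (f m))"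
    by blast
  then show ?thesis
    using accepting_run_graft[where Rs = "fst \<circ> f" and \<rho>s = "snd \<circ> f"] assms(1-3)
    unfolding accepts_from_def by fastforce
qed

text \<open>Finitely many children are needed because Box atoms are monotone in M only then.\<close>

lemma accepts_from_iff:
  assumes "finite (children (tdom t) v)"
  shows "accepts_from A q t v \<longleftrightarrow> q \<in> hstates A \<and> v \<in> tdom t \<and>
    pbf_sat (sat_atom t v {(p, w). accepts_from A p t w}) (hdelta A q (tlab t v) (v = []))"
proof
  assume "accepts_from A q t v"
  then obtain R \<rho> where run: "accepting_run (A\<lparr>hinit := q\<rparr>) t v R \<rho>"
    unfolding accepts_from_def by blast
  note root = accepting_runD(1,2)[OF run]
  have "\<rho> ` children R [] \<subseteq> {(p, w). accepts_from A p t w}"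
  proof
    fix c assume "c \<in> \<rho> ` children R []"
    then obtain n where "[n] \<in> R" "c = \<rho> [n]"
      by (auto simp: children_def)
    then show "c \<in> {(p, w). accepts_from A p t w}"
      using accepting_run_Cons[OF run, of n] unfolding accepts_from_def
      by (auto simp: case_prod_beta)
  qed
  moreover have "pbf_sat (sat_atom t v (\<rho> ` children R [])) (hdelta A q (tlab t v) (v = []))"
    using accepting_runD(6)[OF run root(1)] root(2) by simp
  ultimately show "q \<in> hstates A \<and> v \<in> tdom t \<and>
      pbf_sat (sat_atom t v {(p, w). accepts_from A p t w}) (hdelta A q (tlab t v) (v = []))"
    using accepting_runD(4,5)[OF run root(1)] root(2) assms
    by (auto intro: pbf_sat_mono sat_atom_mono)
qed (auto intro: accepts_from_intro)

definition one_way :: "'ap hta \<Rightarrow> bool" where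
  "one_way A \<longleftrightarrow> (\<forall>q \<in> hstates A. \<forall>\<sigma>. hdelta A q \<sigma> True = hdelta A q \<sigma> False) \<and>
     (\<forall>q \<in> hstates A. \<forall>\<sigma> b. \<forall>a \<in> pbf_atoms (hdelta A q \<sigma> b). \<not> is_up a)"

lemma one_way_linear_one_way: "one_way_linear A \<Longrightarrow> one_way A"
  unfolding one_way_linear_def one_way_def by blast

lemma subtree_eqD:
  assumes "subtree t v = subtree t' v'"
  shows "v @ u \<in> tdom t \<longleftrightarrow> v' @ u \<in> tdom t'" and "tlab t (v @ u) = tlab t' (v' @ u)"
  using arg_cong[OF assms, of tdom] arg_cong[OF assms, of tlab]
  by (simp_all add: subtree_def set_eq_iff fun_eq_iff)

lemma one_way_transition_subtree:
  assumes ow: "one_way A" and p: "p \<in> hstates A" and sub: "subtree t v = subtree t' v'"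
    and M: "{(q, z). (q, v @ z) \<in> M} = {(q, z). (q, v' @ z) \<in> M'}"
    and sat: "pbf_sat (sat_atom t (v @ u) M) (hdelta A p (tlab t (v @ u)) b)"
  shows "pbf_sat (sat_atom t' (v' @ u) M') (hdelta A p (tlab t' (v' @ u)) b')"
proof -
  have "sat_atom t (v @ u) M a = sat_atom t' (v' @ u) M' a"
    if "a \<in> pbf_atoms (hdelta A p \<sigma> b)" for a \<sigma> b
    using ow p that M unfolding one_way_def by (simp add: sat_atom_subtree sub)
  then have "pbf_sat (sat_atom t (v @ u) M) (hdelta A p \<sigma> b) =
      pbf_sat (sat_atom t' (v' @ u) M') (hdelta A p \<sigma> b)" for \<sigma> b
    by (rule pbf_sat_cong)
  moreover have "hdelta A p \<sigma> b' = hdelta A p \<sigma> b" for \<sigma>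
    using ow p unfolding one_way_def by (metis (full_types))
  ultimately show ?thesis
    using sat subtree_eqD(2)[OF sub] by simp
qed

lemma all_take_snoc:
  "(\<forall>n \<le> length (w @ [i]). P (take n (w @ [i]))) \<longleftrightarrow> (\<forall>n \<le> length w. P (take n w)) \<and> P (w @ [i])"
proof
  assume H: "\<forall>n \<le> length (w @ [i]). P (take n (w @ [i]))"
  have "P (take n w)" if "n \<le> length w" for n
    using H[rule_format, of n] that by simp
  moreover have "P (w @ [i])"
    using H[rule_format, of "length (w @ [i])"] by simp
  ultimately show "(\<forall>n \<le> length w. P (take n w)) \<and> P (w @ [i])"
    by blast
next
  assume H: "(\<forall>n \<le> length w. P (take n w)) \<and> P (w @ [i])"
  show "\<forall>n \<le> length (w @ [i]). P (take n (w @ [i]))"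
  proof (intro allI impI)
    fix n assume "n \<le> length (w @ [i])"
    then consider "n \<le> length w" | "n = length (w @ [i])"
      by fastforce
    then show "P (take n (w @ [i]))"
      using H by cases simp_all
  qed
qed

lemma one_way_accepts_from_subtree:
  assumes ow: "one_way A" and sub: "subtree t v = subtree t' v'"
    and "accepts_from A q t v"
  shows "accepts_from A q t' v'"
proof -
  obtain R \<rho> where run: "accepting_run (A\<lparr>hinit := q\<rparr>) t v R \<rho>"
    using assms(3) unfolding accepts_from_def by blast
  \<comment> \<open>Keep the part of the run that only visits the subtree at v, and move it to v'.\<close>
  define R' where "R' = {w \<in> R. \<forall>n \<le> length w. \<exists>u. snd (\<rho> (take n w)) = v @ u}"
  define pos where "pos w = drop (length v) (snd (\<rho> w))" for w
  define \<rho>' where "\<rho>' w = (fst (\<rho> w), v' @ pos w)" for w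
  have below: "snd (\<rho> w) = v @ pos w" if "w \<in> R'" for w
  proof -
    have "\<exists>u. snd (\<rho> (take (length w) w)) = v @ u"
      using that unfolding R'_def by blast
    then show ?thesis
      by (auto simp: pos_def)
  qed
  have R'_snoc: "w @ [i] \<in> R' \<longleftrightarrow> w \<in> R' \<and> w @ [i] \<in> R \<and> (\<exists>u. snd (\<rho> (w @ [i])) = v @ u)" for w i
    using all_take_snoc[of w i "\<lambda>w'. \<exists>u. snd (\<rho> w') = v @ u"] accepting_runD(3)[OF run, of w i]
    unfolding R'_def by blast
  have children_R': "(p, v @ z) \<in> \<rho> ` children R w \<longleftrightarrow> (p, v' @ z) \<in> \<rho>' ` children R' w"
    if "w \<in> R'" for w p z
  proof
    assume "(p, v @ z) \<in> \<rho> ` children R w"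
    then obtain i where "w @ [i] \<in> R" "\<rho> (w @ [i]) = (p, v @ z)"
      by (auto simp: children_def)
    moreover from this have "w @ [i] \<in> R'"
      using that R'_snoc by auto
    ultimately show "(p, v' @ z) \<in> \<rho>' ` children R' w"
      unfolding children_def \<rho>'_def pos_def by (auto intro!: image_eqI[of _ _ "w @ [i]"])
  next
    assume "(p, v' @ z) \<in> \<rho>' ` children R' w"
    then obtain i where "w @ [i] \<in> R'" "\<rho>' (w @ [i]) = (p, v' @ z)"
      by (auto simp: children_def)
    moreover from this have "\<rho> (w @ [i]) = (p, v @ z)"
      using below[of "w @ [i]"] by (simp add: \<rho>'_def prod_eq_iff)
    ultimately show "(p, v @ z) \<in> \<rho> ` children R w"
      unfolding children_def R'_def by (auto intro!: image_eqI[of _ _ "w @ [i]"])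
  qed
  have local: "fst (\<rho>' w) \<in> hstates A \<and> snd (\<rho>' w) \<in> tdom t' \<and>
      pbf_sat (sat_atom t' (snd (\<rho>' w)) (\<rho>' ` children R' w))
        (hdelta A (fst (\<rho>' w)) (tlab t' (snd (\<rho>' w))) (snd (\<rho>' w) = []))" if "w \<in> R'" for w
  proof -
    have w: "w \<in> R"
      using that unfolding R'_def by blast
    note run_w = accepting_runD(4-6)[OF run w, unfolded below[OF that]]
    have "{(p, z). (p, v @ z) \<in> \<rho> ` children R w} = {(p, z). (p, v' @ z) \<in> \<rho>' ` children R' w}"
      using children_R'[OF that] by auto
    from one_way_transition_subtree[OF ow _ sub this] show ?thesis
      using run_w subtree_eqD(1)[OF sub] by (simp add: \<rho>'_def)
  qed
  have "children R' w \<subseteq> children R w" for w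
    unfolding children_def R'_def by auto
  then have "\<exists>\<^sub>\<infinity>k. fst (\<rho>' (\<pi> k)) \<in> hacc A" if "\<pi> 0 = []" "\<forall>k. \<pi> (Suc k) \<in> children R' (\<pi> k)" for \<pi>
    using accepting_runD(7)[OF run, of \<pi>] that by (auto simp: \<rho>'_def)
  moreover have "[] \<in> R'" "\<rho>' [] = (q, v')"
    using accepting_runD(1,2)[OF run] by (auto simp: R'_def \<rho>'_def pos_def)
  ultimately have "accepting_run (A\<lparr>hinit := q\<rparr>) t' v' R' \<rho>'"
    unfolding accepting_run_def using R'_snoc local by simp
  then show ?thesis
    unfolding accepts_from_def by blast
qed

section \<open>Trees described by shapes\<close>

text \<open>
  Moving to a child with the opposite label never switches the mark x on, and only marked nodes
  of height 0 have a fifth child; so \<^term>\<open>Mid x s j\<close> has a path of alternating labels to a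
  node with five children iff x.
\<close>

datatype shape = Mid bool bool nat | Dead bool

fun shape_child :: "shape \<Rightarrow> nat \<Rightarrow> shape" where
  "shape_child (Mid x s (Suc j)) i =
     (if i = 0 then Mid x (\<not> s) j else if i = 1 then Mid False (\<not> s) j
      else if i = 2 then Mid True s j else Mid False s j)"
| "shape_child (Mid x s 0) i = Dead s"
| "shape_child (Dead s) i = Dead s"

fun shape_degree :: "shape \<Rightarrow> nat" where
  "shape_degree (Mid x s j) = (if x \<and> j = 0 then 5 else 4)"
| "shape_degree (Dead s) = 4"

fun shape_label :: "shape \<Rightarrow> bool" where
  "shape_label (Mid x s j) = s"
| "shape_label (Dead s) = s"

fun shape_path :: "shape \<Rightarrow> nat list \<Rightarrow> bool" where
  "shape_path k [] = True"
| "shape_path k (i # v) \<longleftrightarrow> i < shape_degree k \<and> shape_path (shape_child k i) v"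

fun shape_at :: "shape \<Rightarrow> nat list \<Rightarrow> shape" where
  "shape_at k [] = k"
| "shape_at k (i # v) = shape_at (shape_child k i) v"

definition bool_label :: "bool \<Rightarrow> 'ap set" where
  "bool_label s = (if s then UNIV else {})"

definition tree_of_shape :: "shape \<Rightarrow> 'ap tree" where
  "tree_of_shape k = \<lparr>tdom = {v. shape_path k v},
     tlab = (\<lambda>v. if shape_path k v then bool_label (shape_label (shape_at k v)) else {})\<rparr>"

lemma bool_label_eq_empty_iff [simp]: "bool_label s = {} \<longleftrightarrow> \<not> s"
  by (simp add: bool_label_def)

lemma shape_path_append [simp]:
  "shape_path k (v @ u) \<longleftrightarrow> shape_path k v \<and> shape_path (shape_at k v) u"
  by (induction v arbitrary: k) auto

lemma shape_at_append [simp]: "shape_at k (v @ u) = shape_at (shape_at k v) u"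
  by (induction v arbitrary: k) auto

lemma tdom_tree_of_shape [simp]: "tdom (tree_of_shape k) = {v. shape_path k v}"
  by (simp add: tree_of_shape_def)

lemma tlab_tree_of_shape [simp]:
  "shape_path k v \<Longrightarrow> tlab (tree_of_shape k) v = bool_label (shape_label (shape_at k v))"
  by (simp add: tree_of_shape_def)

lemma children_tree_of_shape:
  assumes "shape_path k v"
  shows "children (tdom (tree_of_shape k)) v = (\<lambda>i. v @ [i]) ` {..<shape_degree (shape_at k v)}"
  using assms by (auto simp: children_def)

lemma finite_children_tree_of_shape: "finite (children (tdom (tree_of_shape k)) v)"
proof (rule finite_subset)
  show "children (tdom (tree_of_shape k)) v \<subseteq> (\<lambda>i. v @ [i]) ` {..<shape_degree (shape_at k v)}"
    by (auto simp: children_def)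
qed simp

lemma shape_degree_pos: "0 < shape_degree k"
  by (cases k) auto

lemma is_tree_tree_of_shape: "is_tree (tree_of_shape k)"
  unfolding is_tree_def by (auto simp: tree_of_shape_def intro: shape_degree_pos)

lemma subtree_tree_of_shape:
  "shape_path k v \<Longrightarrow> subtree (tree_of_shape k) v = tree_of_shape (shape_at k v)"
  by (simp add: subtree_def tree_of_shape_def fun_eq_iff)

lemma sat_atom_tree_of_shape:
  assumes "shape_path k v"
  shows "sat_atom (tree_of_shape k) v M (Dia n p) \<longleftrightarrow>
      (\<exists>S \<subseteq> {..<shape_degree (shape_at k v)}. card S = n \<and> (\<forall>i\<in>S. (p, v @ [i]) \<in> M))"
    and "sat_atom (tree_of_shape k) v M (Box n p) \<longleftrightarrow>
      card {i. i < shape_degree (shape_at k v) \<and> (p, v @ [i]) \<notin> M} < n"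
proof -
  have "inj_on (\<lambda>i. v @ [i]) {..<shape_degree (shape_at k v)}"
    by (simp add: inj_on_def)
  note image = sat_atom_children_image[OF children_tree_of_shape[OF assms] this]
  show "sat_atom (tree_of_shape k) v M (Dia n p) \<longleftrightarrow>
      (\<exists>S \<subseteq> {..<shape_degree (shape_at k v)}. card S = n \<and> (\<forall>i\<in>S. (p, v @ [i]) \<in> M))"
    unfolding image(1) by (blast intro: finite_subset[OF _ finite_lessThan])
  show "sat_atom (tree_of_shape k) v M (Box n p) \<longleftrightarrow>
      card {i. i < shape_degree (shape_at k v) \<and> (p, v @ [i]) \<notin> M} < n"
    unfolding image(2) by simp
qed

lemma accepts_from_tree_of_shape_iff:
  fixes A :: "'ap hta"
  shows "accepts_from A q (tree_of_shape k) v \<longleftrightarrow> q \<in> hstates A \<and> shape_path k v \<and>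
    pbf_sat (sat_atom (tree_of_shape k :: 'ap tree) v
        {(p, w). accepts_from A p (tree_of_shape k) w})
      (hdelta A q (bool_label (shape_label (shape_at k v))) (v = []))"
  by (subst accepts_from_iff[OF finite_children_tree_of_shape]) (auto cong: conj_cong)

definition shape_accepts :: "'ap hta \<Rightarrow> nat \<Rightarrow> shape \<Rightarrow> bool" where
  "shape_accepts A q k \<longleftrightarrow> accepts_from A q (tree_of_shape k :: 'ap tree) []"

lemma lang_tree_of_shape: "tree_of_shape k \<in> lang A \<longleftrightarrow> shape_accepts A (hinit A) k"
  by (simp add: lang_accepts_from shape_accepts_def is_tree_tree_of_shape)

lemma shape_accepts_hstates: "shape_accepts A q k \<Longrightarrow> q \<in> hstates A"
  unfolding shape_accepts_def by (rule accepts_fromD)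

fun shape_atom_sat :: "'ap hta \<Rightarrow> shape \<Rightarrow> nat hatom \<Rightarrow> bool" where
  "shape_atom_sat A k (Dia n q) \<longleftrightarrow>
     (\<exists>S \<subseteq> {..<shape_degree k}. card S = n \<and> (\<forall>i\<in>S. shape_accepts A q (shape_child k i)))"
| "shape_atom_sat A k (Box n q) \<longleftrightarrow>
     card {i. i < shape_degree k \<and> \<not> shape_accepts A q (shape_child k i)} < n"
| "shape_atom_sat A k (Up q) \<longleftrightarrow> False"

lemma sat_atom_root_tree_of_shape:
  fixes A :: "'ap hta"
  assumes "one_way A" and "\<not> is_up a"
  shows "sat_atom (tree_of_shape k :: 'ap tree) []
    {(p, w). accepts_from A p (tree_of_shape k) w} a = shape_atom_sat A k a"
proof -
  let ?t = "tree_of_shape k :: 'ap tree"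
  let ?M = "{(p, w). accepts_from A p ?t w}"
  have "accepts_from A p ?t [i] \<longleftrightarrow> shape_accepts A p (shape_child k i)"
    if "i < shape_degree k" for p i
  proof -
    have "subtree ?t [i] = subtree (tree_of_shape (shape_child k i)) []"
      using that by (simp add: subtree_tree_of_shape)
    then show ?thesis
      unfolding shape_accepts_def using one_way_accepts_from_subtree[OF assms(1)] by metis
  qed
  then have M: "(p, [] @ [i]) \<in> ?M \<longleftrightarrow> shape_accepts A p (shape_child k i)"
    if "i < shape_degree k" for p i
    using that by simp
  have "shape_path k []"
    by simp
  note atoms = sat_atom_tree_of_shape[OF this, unfolded shape_at.simps(1)]
  have "sat_atom ?t [] ?M (Dia n p) = shape_atom_sat A k (Dia n p)" for n p
  proof -
    have "(\<forall>i\<in>S. (p, [] @ [i]) \<in> ?M) \<longleftrightarrow> (\<forall>i\<in>S. shape_accepts A p (shape_child k i))"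
      if "S \<subseteq> {..<shape_degree k}" for S
      using that M by (auto simp: subset_iff)
    then show ?thesis
      unfolding atoms(1) shape_atom_sat.simps by blast
  qed
  moreover have "sat_atom ?t [] ?M (Box n p) = shape_atom_sat A k (Box n p)" for n p
  proof -
    have "{i. i < shape_degree k \<and> (p, [] @ [i]) \<notin> ?M} =
        {i. i < shape_degree k \<and> \<not> shape_accepts A p (shape_child k i)}"
      using M by blast
    then show ?thesis
      unfolding atoms(2) shape_atom_sat.simps by simp
  qed
  ultimately show ?thesis
    using assms(2) by (cases a) simp_all
qed

lemma shape_accepts_iff:
  fixes A :: "'ap hta"
  assumes "one_way A"
  shows "shape_accepts A q k \<longleftrightarrow>
    q \<in> hstates A \<and> pbf_sat (shape_atom_sat A k) (hdelta A q (bool_label (shape_label k)) True)"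
proof -
  let ?M = "{(p, w). accepts_from A p (tree_of_shape k) w}"
  have "pbf_sat (sat_atom (tree_of_shape k :: 'ap tree) [] ?M) (hdelta A q \<sigma> True) =
      pbf_sat (shape_atom_sat A k) (hdelta A q \<sigma> True)"
    if "q \<in> hstates A" for \<sigma>
  proof (rule pbf_sat_cong)
    fix a assume "a \<in> pbf_atoms (hdelta A q \<sigma> True)"
    then have "\<not> is_up a"
      using assms that unfolding one_way_def by blast
    then show "sat_atom (tree_of_shape k :: 'ap tree) [] ?M a = shape_atom_sat A k a"
      by (rule sat_atom_root_tree_of_shape[OF assms])
  qed
  then show ?thesis
    unfolding shape_accepts_def by (subst accepts_from_tree_of_shape_iff) auto
qed

section \<open>Stabilisation along the height\<close>

lemma mono_bool_idem:
  fixes f :: "bool \<Rightarrow> bool"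
  assumes "f False \<Longrightarrow> f True"
  shows "f (f b) = f b"
  using assms by (cases b; cases "f False"; cases "f True") auto

lemma alternating_recurrence_stabilises:
  fixes e :: "bool \<Rightarrow> bool \<Rightarrow> nat \<Rightarrow> bool" and H :: "bool \<Rightarrow> bool \<Rightarrow> bool"
  assumes mono: "\<And>s. H s False \<Longrightarrow> H s True"
    and rec: "\<And>x s j. g \<le> j \<Longrightarrow>
      e x s (Suc j) = H s (e x (\<not> s) j \<or> e False (\<not> s) j \<or> e True s j \<or> e False s j)"
    and "g + 3 \<le> j"
  shows "e x s j = e True s (g + 3)"
proof -
  \<comment> \<open>The disjunction U of the four values at a height obeys U (j + 1) = K (U j) for a
    monotone, hence idempotent, K, so U is constant from g + 1 on; as H s is constant or the
    identity, every e x s (j + 1) then agrees with H s (U j).\<close>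
  define U where "U j \<longleftrightarrow> (\<exists>x s. e x s j)" for j
  define K where "K b \<longleftrightarrow> H True b \<or> H False b" for b
  define u where "u = K (U g)"
  have H_mono: "H s b \<Longrightarrow> (b \<longrightarrow> b') \<Longrightarrow> H s b'" for s b b'
    using mono by (cases b; cases b') auto
  have U_eq: "(e True (\<not> s) j \<or> e False (\<not> s) j \<or> e True s j \<or> e False s j) = U j" for s j
    unfolding U_def ex_bool_eq by (cases s) auto
  have T_rec: "e True s (Suc j) = H s (U j)" if "g \<le> j" for s j
    using rec[OF that, of True s] U_eq by simp
  have F_imp_T: "e True s (Suc j)" if "g \<le> j" "e False s (Suc j)" for s j
  proof -
    have "H s (e False (\<not> s) j \<or> e False (\<not> s) j \<or> e True s j \<or> e False s j)"
      using rec[OF that(1), of False s] that(2) by simp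
    then have "H s (U j)"
      by (rule H_mono) (auto simp: U_def)
    then show ?thesis
      by (simp add: T_rec[OF that(1)])
  qed
  have U_rec: "U (Suc j) = K (U j)" if "g \<le> j" for j
  proof -
    have "U (Suc j) \<longleftrightarrow> e True True (Suc j) \<or> e True False (Suc j)"
      unfolding U_def ex_bool_eq using F_imp_T[OF that] by blast
    then show ?thesis
      unfolding K_def by (simp add: T_rec[OF that])
  qed
  have K_idem: "K (K b) = K b" for b
    by (rule mono_bool_idem) (use mono in \<open>auto simp: K_def\<close>)
  have U_const: "U j = u" if "g + 1 \<le> j" for j
    using that
  proof (induction j rule: dec_induct)
    case base
    then show ?case by (simp add: U_rec u_def)
  next
    case (step j)
    then show ?case by (simp add: U_rec u_def K_idem)
  qed
  have T_const: "e True s j = H s u" if "g + 2 \<le> j" for s j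
    using that T_rec[of "j - 1"] U_const[of "j - 1"] by (cases j) auto
  have "e x s j = H s u" if "g + 3 \<le> j" for x s j
  proof -
    obtain j' where j: "j = Suc j'" "g + 2 \<le> j'"
      using \<open>g + 3 \<le> j\<close> by (cases j) auto
    define arg where "arg \<longleftrightarrow> e x (\<not> s) j' \<or> e False (\<not> s) j' \<or> e True s j' \<or> e False s j'"
    have "e x s j = H s arg"
      unfolding arg_def j(1) using rec j(2) by simp
    moreover have "arg \<longrightarrow> u"
      using U_const[of j'] j(2) unfolding arg_def U_def by auto
    moreover have "H s u \<longrightarrow> arg" if "\<not> H s False"
    proof -
      have "H s u \<Longrightarrow> u"
        using that by (cases u) auto
      then show ?thesis
        using T_const[OF j(2), of s] unfolding arg_def by auto
    qed
    ultimately show ?thesis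
      by (metis H_mono)
  qed
  then show ?thesis
    using assms(3) by simp
qed

lemma alternating_recurrence_stabilises_conj:
  fixes e :: "bool \<Rightarrow> bool \<Rightarrow> nat \<Rightarrow> bool" and H :: "bool \<Rightarrow> bool \<Rightarrow> bool"
  assumes mono: "\<And>s. H s False \<Longrightarrow> H s True"
    and rec: "\<And>x s j. g \<le> j \<Longrightarrow>
      e x s (Suc j) = H s (e x (\<not> s) j \<and> e False (\<not> s) j \<and> e True s j \<and> e False s j)"
    and "g + 3 \<le> j"
  shows "e x s j = e True s (g + 3)"
proof -
  have "(\<not> e x s j) = (\<not> e True s (g + 3))"
  proof (rule alternating_recurrence_stabilises[where H = "\<lambda>s b. \<not> H s (\<not> b)"])
    show "\<not> H s (\<not> False) \<Longrightarrow> \<not> H s (\<not> True)" for s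
      using mono by auto
    show "(\<not> e x s (Suc j)) =
        (\<not> H s (\<not> (\<not> e x (\<not> s) j \<or> \<not> e False (\<not> s) j \<or> \<not> e True s j \<or> \<not> e False s j)))"
      if "g \<le> j" for x s j
      by (simp only: rec[OF that] de_Morgan_disj not_not)
  qed fact
  then show ?thesis
    by simp
qed

definition stable_at :: "'ap hta \<Rightarrow> nat \<Rightarrow> nat \<Rightarrow> bool" where
  "stable_at A q g \<longleftrightarrow>
     (\<forall>j \<ge> g. \<forall>x s. shape_accepts A q (Mid x s j) = shape_accepts A q (Mid True s g))"

lemma stable_at_mono:
  assumes "stable_at A q g" and "g \<le> g'"
  shows "stable_at A q g'"
  using assms unfolding stable_at_def by (metis order_trans order_refl)

lemma stable_at_notin: "q \<notin> hstates A \<Longrightarrow> stable_at A q g"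
  unfolding stable_at_def using shape_accepts_hstates by metis

lemma shape_child_Mid_Suc:
  "\<exists>y. shape_child (Mid x s (Suc j)) i = Mid y (if i \<le> 1 then \<not> s else s) j"
  by auto

lemma shape_atom_sat_stable:
  assumes stable: "stable_at A (atom_state a) g" and "g \<le> j"
  shows "shape_atom_sat A (Mid x s (Suc j)) a = shape_atom_sat A (Mid True s (Suc g)) a"
proof -
  have child: "shape_accepts A p (shape_child (Mid x s (Suc j)) i) =
      shape_accepts A p (shape_child (Mid True s (Suc g)) i)" if "stable_at A p g" for p i
  proof -
    obtain y y' where y: "shape_child (Mid x s (Suc j)) i = Mid y (if i \<le> 1 then \<not> s else s) j"
      and y': "shape_child (Mid True s (Suc g)) i = Mid y' (if i \<le> 1 then \<not> s else s) g"
      using shape_child_Mid_Suc by blast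
    have "shape_accepts A p (Mid y s' j) = shape_accepts A p (Mid True s' g)"
      and "shape_accepts A p (Mid y' s' g) = shape_accepts A p (Mid True s' g)" for s'
      using that \<open>g \<le> j\<close> unfolding stable_at_def by blast+
    then show ?thesis
      by (simp only: y y')
  qed
  have deg: "shape_degree (Mid x s (Suc j)) = shape_degree (Mid True s (Suc g))"
    by simp
  show ?thesis
  proof (cases a)
    case (Dia n p)
    then show ?thesis
      using child[of p] stable by (simp only: shape_atom_sat.simps deg atom_state.simps)
  next
    case (Box n p)
    then show ?thesis
      using child[of p] stable by (simp only: shape_atom_sat.simps deg atom_state.simps)
  qed simp
qed

lemma shape_atom_sat_Dia_1:
  "shape_atom_sat A k (Dia 1 q) \<longleftrightarrow> (\<exists>i < shape_degree k. shape_accepts A q (shape_child k i))"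
  by (auto simp: card_1_singleton_iff)

lemma shape_atom_sat_Box_1:
  "shape_atom_sat A k (Box 1 q) \<longleftrightarrow> (\<forall>i < shape_degree k. shape_accepts A q (shape_child k i))"
  by (auto simp: card_eq_0_iff)

lemma shape_atom_sat_Dia_Mid:
  "shape_atom_sat A (Mid x s (Suc j)) (Dia 1 q) \<longleftrightarrow>
    shape_accepts A q (Mid x (\<not> s) j) \<or> shape_accepts A q (Mid False (\<not> s) j) \<or>
    shape_accepts A q (Mid True s j) \<or> shape_accepts A q (Mid False s j)"
  unfolding shape_atom_sat_Dia_1 by (simp add: numeral_eq_Suc Ex_less_Suc) blast

lemma shape_atom_sat_Box_Mid:
  "shape_atom_sat A (Mid x s (Suc j)) (Box 1 q) \<longleftrightarrow>
    shape_accepts A q (Mid x (\<not> s) j) \<and> shape_accepts A q (Mid False (\<not> s) j) \<and>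
    shape_accepts A q (Mid True s j) \<and> shape_accepts A q (Mid False s j)"
  unfolding shape_atom_sat_Box_1 by (simp add: numeral_eq_Suc All_less_Suc) blast

lemma stable_at_step:
  fixes A :: "'ap hta"
  assumes ow: "one_way A"
    and self_atom: "a = Dia 1 q \<or> a = Box 1 q"
    and self_loops: "\<And>\<sigma> b. occ q (hdelta A q \<sigma> b) \<subseteq> {a}"
    and lower: "\<And>\<sigma> b a'. a' \<in> pbf_atoms (hdelta A q \<sigma> b) \<Longrightarrow> atom_state a' \<noteq> q \<Longrightarrow>
      stable_at A (atom_state a') g"
  shows "stable_at A q (g + 3)"
proof (cases "q \<in> hstates A")
  case False
  then show ?thesis
    by (rule stable_at_notin)
next
  case True
  define H where "H s b = pbf_sat (\<lambda>a'. if atom_state a' = q then b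
      else shape_atom_sat A (Mid True s (Suc g)) a') (hdelta A q (bool_label s) True)" for s b
  define e where "e x s j = shape_accepts A q (Mid x s j)" for x s j
  have mono: "H s False \<Longrightarrow> H s True" for s
    unfolding H_def by (erule pbf_sat_mono) (auto split: if_splits)
  have rec: "e x s (Suc j) = H s (shape_atom_sat A (Mid x s (Suc j)) a)" if "g \<le> j" for x s j
  proof -
    have "shape_atom_sat A (Mid x s (Suc j)) a' =
        (if atom_state a' = q then shape_atom_sat A (Mid x s (Suc j)) a
         else shape_atom_sat A (Mid True s (Suc g)) a')"
      if "a' \<in> pbf_atoms (hdelta A q (bool_label s) True)" for a'
    proof (cases "atom_state a' = q")
      case True
      then have "a' = a"
        using self_loops that unfolding occ_def by blast
      then show ?thesis
        using True by simp
    next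
      case False
      then show ?thesis
        using shape_atom_sat_stable[OF lower[OF that False] \<open>g \<le> j\<close>] by simp
    qed
    then have "pbf_sat (shape_atom_sat A (Mid x s (Suc j))) (hdelta A q (bool_label s) True) =
        H s (shape_atom_sat A (Mid x s (Suc j)) a)"
      unfolding H_def by (rule pbf_sat_cong)
    then show ?thesis
      unfolding e_def shape_accepts_iff[OF ow] using True by simp
  qed
  from self_atom show ?thesis
  proof
    assume "a = Dia 1 q"
    then have "e x s (Suc j) = H s (e x (\<not> s) j \<or> e False (\<not> s) j \<or> e True s j \<or> e False s j)"
      if "g \<le> j" for x s j
      using rec[OF that] unfolding \<open>a = Dia 1 q\<close> shape_atom_sat_Dia_Mid e_def by blast
    with mono have "e x s j = e True s (g + 3)" if "g + 3 \<le> j" for x s j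
      using that by (rule alternating_recurrence_stabilises)
    then show ?thesis
      unfolding stable_at_def e_def by blast
  next
    assume "a = Box 1 q"
    then have "e x s (Suc j) = H s (e x (\<not> s) j \<and> e False (\<not> s) j \<and> e True s j \<and> e False s j)"
      if "g \<le> j" for x s j
      using rec[OF that] unfolding \<open>a = Box 1 q\<close> shape_atom_sat_Box_Mid e_def by blast
    with mono have "e x s j = e True s (g + 3)" if "g + 3 \<le> j" for x s j
      using that by (rule alternating_recurrence_stabilises_conj)
    then show ?thesis
      unfolding stable_at_def e_def by blast
  qed
qed

lemma stable_at_exists:
  fixes A :: "'ap hta"
  assumes ow: "one_way A" and lin: "linear_order_ok A"
    and self_loops: "\<And>q. q \<in> hstates A \<Longrightarrow>
      \<exists>a \<in> {Dia 1 q, Box 1 q}. \<forall>\<sigma> b. occ q (hdelta A q \<sigma> b) \<subseteq> {a}"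
  shows "\<exists>g. stable_at A q g"
proof -
  obtain rk :: "nat \<Rightarrow> nat" where inj: "inj_on rk (hstates A)"
    and down: "\<And>q \<sigma> b a. q \<in> hstates A \<Longrightarrow> a \<in> pbf_atoms (hdelta A q \<sigma> b) \<Longrightarrow>
      rk (atom_state a) \<le> rk q"
    using lin unfolding linear_order_ok_def by blast
  have "\<exists>g. \<forall>p \<in> hstates A. rk p < r \<longrightarrow> stable_at A p g" for r
  proof (induction r)
    case (Suc r)
    then obtain g where g: "\<And>p. p \<in> hstates A \<Longrightarrow> rk p < r \<Longrightarrow> stable_at A p g"
      by blast
    have "stable_at A p (g + 3)" if p: "p \<in> hstates A" "rk p < Suc r" for p
    proof (cases "rk p < r")
      case True
      then show ?thesis
        using g[OF p(1)] stable_at_mono by fastforce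
    next
      case False
      obtain a where a: "a = Dia 1 p \<or> a = Box 1 p" "\<And>\<sigma> b. occ p (hdelta A p \<sigma> b) \<subseteq> {a}"
        using self_loops[OF p(1)] by blast
      show ?thesis
      proof (rule stable_at_step[OF ow a])
        fix \<sigma> b a' assume a': "a' \<in> pbf_atoms (hdelta A p \<sigma> b)" "atom_state a' \<noteq> p"
        show "stable_at A (atom_state a') g"
        proof (cases "atom_state a' \<in> hstates A")
          case True
          then have "rk (atom_state a') < rk p"
            using down[OF p(1) a'(1)] inj p(1) a'(2) by (metis inj_on_eq_iff le_neq_implies_less)
          then show ?thesis
            using g[OF True] False p(2) by simp
        qed (rule stable_at_notin)
      qed
    qed
    then show ?case
      by blast
  qed simp
  then obtain g where "\<And>p. p \<in> hstates A \<Longrightarrow> rk p < Suc (rk q) \<Longrightarrow> stable_at A p g"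
    by blast
  then show ?thesis
    using stable_at_notin lessI by blast
qed

lemma one_way_linear_self_loops:
  assumes "one_way_linear A" and "q \<in> hstates A"
  shows "\<exists>a \<in> {Dia 1 q, Box 1 q}. \<forall>\<sigma> b. occ q (hdelta A q \<sigma> b) \<subseteq> {a}"
proof -
  have "transient_st A q \<or> existential_st A q \<or> universal_st A q"
    using assms unfolding one_way_linear_def by blast
  then show ?thesis
    unfolding transient_st_def existential_st_def universal_st_def by fastforce
qed

section \<open>A two-way automaton checking alternation\<close>

text \<open>
  State 3 guesses a path of alternating labels down to a node with at least five children,
  verifying each step from the child by going up in state 1 (parent label empty) or 2
  (parent label nonempty); state 0 accepts everything.
\<close>

definition alternation_delta :: "nat \<Rightarrow> 'ap set \<Rightarrow> bool \<Rightarrow> nat hatom pbf" where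
  "alternation_delta q \<sigma> root =
     (if q = 0 then PTrue
      else if q = 1 then (if \<sigma> = {} then PTrue else PFalse)
      else if q = 2 then (if \<sigma> = {} then PFalse else PTrue)
      else if q = 3 then
        (if root then POr (PAtom (Dia 5 0)) (PAtom (Dia 1 3))
         else PAnd (PAtom (Up (if \<sigma> = {} then 2 else 1))) (POr (PAtom (Dia 5 0)) (PAtom (Dia 1 3))))
      else PFalse)"

definition alternation_hta :: "'ap hta" where
  "alternation_hta = \<lparr>hstates = {0, 1, 2, 3}, hdelta = alternation_delta, hinit = 3, hacc = {}\<rparr>"

lemma alternation_hta_simps [simp]:
  "hstates alternation_hta = {0, 1, 2, 3}" "hdelta alternation_hta = alternation_delta"
  "hinit alternation_hta = 3" "hacc alternation_hta = {}"
  by (simp_all add: alternation_hta_def)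

lemma two_way_linear_alternation_hta: "two_way_linear alternation_hta"
proof -
  have atoms: "pbf_atoms (alternation_delta q \<sigma> r) \<subseteq> {Dia 5 0, Dia 1 3, Up 1, Up 2}" for q \<sigma> r
    unfolding alternation_delta_def by auto
  have "hta_wf alternation_hta"
    unfolding hta_wf_def using atoms by fastforce
  moreover have "linear_order_ok alternation_hta"
    unfolding linear_order_ok_def
    by (rule exI[of _ id]) (auto simp: alternation_delta_def split: if_splits)
  moreover have "transient_st alternation_hta q" if "q \<in> {0, 1, 2}" for q
    using that unfolding transient_st_def occ_def by (auto simp: alternation_delta_def)
  moreover have "existential_st alternation_hta 3"
    unfolding existential_st_def occ_def by (auto simp: alternation_delta_def)
  ultimately show ?thesis
    unfolding two_way_linear_def by auto
qed

lemma alternation_accepts_0: "shape_path k v \<Longrightarrow> accepts_from alternation_hta 0 (tree_of_shape k) v"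
  by (subst accepts_from_tree_of_shape_iff) (simp add: alternation_delta_def)

lemma alternation_accepts_check:
  "accepts_from alternation_hta (if \<sigma> = {} then 2 else 1) (tree_of_shape k) v \<longleftrightarrow>
    shape_path k v \<and> (shape_label (shape_at k v) \<longleftrightarrow> \<sigma> = {})"
  by (subst accepts_from_tree_of_shape_iff) (simp add: alternation_delta_def)

lemma pbf_sat_alternation_delta_3:
  "pbf_sat I (alternation_delta 3 \<sigma> root) \<longleftrightarrow>
    (I (Dia 5 0) \<or> I (Dia 1 3)) \<and> (\<not> root \<longrightarrow> I (Up (if \<sigma> = {} then 2 else 1)))"
  by (auto simp: alternation_delta_def)

lemma alternation_accepts_iff:
  "accepts_from (alternation_hta :: 'ap hta) 3 (tree_of_shape k) v \<longleftrightarrow> shape_path k v \<and>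
    (5 \<le> shape_degree (shape_at k v) \<or>
     (\<exists>i < shape_degree (shape_at k v).
        accepts_from (alternation_hta :: 'ap hta) 3 (tree_of_shape k) (v @ [i]))) \<and>
    (v \<noteq> [] \<longrightarrow> shape_label (shape_at k (butlast v)) \<noteq> shape_label (shape_at k v))"
proof (cases "shape_path k v")
  case True
  let ?t = "tree_of_shape k :: 'ap tree"
  let ?M = "{(p, w). accepts_from alternation_hta p ?t w}"
  let ?d = "shape_degree (shape_at k v)"
  let ?L = "shape_label (shape_at k v)"
  have dia5: "sat_atom ?t v ?M (Dia 5 0) \<longleftrightarrow> 5 \<le> ?d"
  proof -
    have "(\<exists>S \<subseteq> {..<?d}. card S = 5) \<longleftrightarrow> 5 \<le> ?d"
      by (metis card_lessThan card_mono finite_lessThan lessThan_subset_iff)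
    moreover have "accepts_from alternation_hta 0 ?t (v @ [i])" if "i < ?d" for i
      using True that by (simp add: alternation_accepts_0)
    ultimately show ?thesis
      unfolding sat_atom_tree_of_shape[OF True] by (auto simp: subset_iff)
  qed
  have dia1: "sat_atom ?t v ?M (Dia 1 3) \<longleftrightarrow> (\<exists>i < ?d. accepts_from alternation_hta 3 ?t (v @ [i]))"
    unfolding sat_atom_tree_of_shape[OF True] by (auto simp: card_1_singleton_iff)
  have up: "sat_atom ?t v ?M (Up (if bool_label ?L = {} then 2 else 1)) \<longleftrightarrow>
      v \<noteq> [] \<and> shape_label (shape_at k (butlast v)) \<noteq> ?L"
  proof -
    have "shape_path k (butlast v)"
      using True by (metis append_butlast_last_id shape_path_append butlast.simps(1))
    then show ?thesis
      using alternation_accepts_check[where \<sigma> = "bool_label ?L :: 'ap set" and k = k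
          and v = "butlast v"]
      by auto
  qed
  have "accepts_from alternation_hta 3 ?t v \<longleftrightarrow>
      pbf_sat (sat_atom ?t v ?M) (alternation_delta 3 (bool_label ?L :: 'ap set) (v = []))"
    using True by (subst accepts_from_tree_of_shape_iff) simp
  then show ?thesis
    unfolding pbf_sat_alternation_delta_3 dia5 dia1 up
    using True by (simp only: simp_thms imp_conjR)
next
  case False
  then show ?thesis
    by (subst accepts_from_tree_of_shape_iff) simp
qed

lemma shape_at_replicate:
  "m \<le> j \<Longrightarrow> shape_path (Mid True s j) (replicate m 0) \<and>
    shape_at (Mid True s j) (replicate m 0) = Mid True (s \<noteq> odd m) (j - m)"
proof (induction m arbitrary: s j)
  case (Suc m)
  from Suc.prems obtain j' where "j = Suc j'" "m \<le> j'"
    by (cases j) auto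
  then show ?case
    using Suc.IH[of j' "\<not> s"] by auto
qed simp

lemma alternation_accepts_Mid_True:
  "accepts_from (alternation_hta :: 'ap hta) 3 (tree_of_shape (Mid True False n)) []"
proof -
  let ?k = "Mid True False n"
  have path: "shape_path ?k (replicate m 0)"
    and at: "shape_at ?k (replicate m 0) = Mid True (odd m) (n - m)" if "m \<le> n" for m
    using shape_at_replicate[OF that, of False] by simp_all
  have snoc: "replicate m 0 @ [0] = replicate (Suc m) (0::nat)" for m
    by (simp add: replicate_append_same)
  have alternating: "shape_label (shape_at ?k (butlast (replicate m 0))) \<noteq>
      shape_label (shape_at ?k (replicate m 0))"
    if "0 < m" "m \<le> n" for m
  proof -
    obtain m' where m: "m = Suc m'"
      using \<open>0 < m\<close> by (cases m) auto
    then have "butlast (replicate m (0::nat)) = replicate m' 0" "odd m \<longleftrightarrow> \<not> odd m'"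
      by (metis butlast_snoc snoc, simp)
    then show ?thesis
      using at[of m] at[of m'] that m by simp
  qed
  have "accepts_from (alternation_hta :: 'ap hta) 3 (tree_of_shape ?k) (replicate m 0)"
    if "m \<le> n" for m
    using that
  proof (induction m rule: inc_induct)
    case base
    show ?case
      using path[of n] at[of n] alternating[of n] by (subst alternation_accepts_iff) simp
  next
    case (step m)
    then have "accepts_from (alternation_hta :: 'ap hta) 3 (tree_of_shape ?k) (replicate m 0 @ [0])"
      by (simp add: snoc)
    moreover have "0 < shape_degree (shape_at ?k (replicate m 0))"
      by (rule shape_degree_pos)
    ultimately show ?case
      using step(2) path[of m] alternating[of m] by (subst alternation_accepts_iff) auto
  qed
  then show ?thesis
    by (metis replicate_0 zero_le)
qed

lemma alternation_accepts_step:
  assumes "accepts_from (alternation_hta :: 'ap hta) 3 (tree_of_shape k) v"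
    and "shape_degree (shape_at k v) < 5"
  obtains i where "accepts_from (alternation_hta :: 'ap hta) 3 (tree_of_shape k) (v @ [i])"
    and "shape_label (shape_child (shape_at k v) i) \<noteq> shape_label (shape_at k v)"
proof -
  obtain i where acc: "accepts_from (alternation_hta :: 'ap hta) 3 (tree_of_shape k) (v @ [i])"
    using alternation_accepts_iff[THEN iffD1, OF assms(1)] assms(2) by auto
  moreover have "shape_label (shape_child (shape_at k v) i) \<noteq> shape_label (shape_at k v)"
    using alternation_accepts_iff[THEN iffD1, OF acc] by simp
  ultimately show ?thesis
    using that by blast
qed

lemma alternation_rejects_Mid_False:
  "\<not> accepts_from (alternation_hta :: 'ap hta) 3 (tree_of_shape (Mid False False n)) []"
proof -
  have "\<not> accepts_from (alternation_hta :: 'ap hta) 3 (tree_of_shape k) v"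
    if "shape_at k v = Mid False s j" for k v s j
    using that
  proof (induction j arbitrary: v s)
    case (0 v s)
    show ?case
    proof
      assume "accepts_from (alternation_hta :: 'ap hta) 3 (tree_of_shape k) v"
      then obtain i where "shape_label (shape_child (shape_at k v) i) \<noteq> shape_label (shape_at k v)"
        by (rule alternation_accepts_step) (simp add: "0.prems")
      then show False
        by (simp add: "0.prems")
    qed
  next
    case (Suc j v s)
    show ?case
    proof
      assume "accepts_from (alternation_hta :: 'ap hta) 3 (tree_of_shape k) v"
      then obtain i
        where acc: "accepts_from (alternation_hta :: 'ap hta) 3 (tree_of_shape k) (v @ [i])"
        and "shape_label (shape_child (shape_at k v) i) \<noteq> shape_label (shape_at k v)"
        by (rule alternation_accepts_step) (simp add: Suc.prems)
      then have "shape_at k (v @ [i]) = Mid False (\<not> s) j"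
        using Suc.prems by (auto split: if_splits)
      then show False
        using Suc.IH acc by blast
    qed
  qed
  from this[of "Mid False False n" "[]" False n] show ?thesis
    by simp
qed

lemma tree_of_shape_in_lang_alternation_hta:
  "tree_of_shape (Mid x False g) \<in> lang alternation_hta \<longleftrightarrow> x"
  using alternation_accepts_Mid_True alternation_rejects_Mid_False
  by (cases x) (simp_all add: lang_accepts_from is_tree_tree_of_shape)

lemma one_way_linear_two_way_linear: "one_way_linear A \<Longrightarrow> two_way_linear A"
  unfolding one_way_linear_def two_way_linear_def by blast

lemma one_way_linear_stable_at:
  fixes A :: "'ap hta"
  assumes "one_way_linear A"
  shows "\<exists>g. stable_at A q g"
proof (rule stable_at_exists)
  show "one_way A"
    using assms by (rule one_way_linear_one_way)
  show "linear_order_ok A"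
    using assms unfolding one_way_linear_def by blast
  show "\<exists>a \<in> {Dia 1 p, Box 1 p}. \<forall>\<sigma> b. occ p (hdelta A p \<sigma> b) \<subseteq> {a}" if "p \<in> hstates A" for p
    using assms that by (rule one_way_linear_self_loops)
qed

lemma one_way_linear_lang_ne_alternation_hta:
  fixes A :: "'ap hta"
  assumes "one_way_linear A"
  shows "lang A \<noteq> lang alternation_hta"
proof -
  obtain g where "stable_at A (hinit A) g"
    using one_way_linear_stable_at[OF assms] by blast
  then have "tree_of_shape (Mid True False g) \<in> lang A \<longleftrightarrow> tree_of_shape (Mid False False g) \<in> lang A"
    unfolding lang_tree_of_shape stable_at_def by blast
  then show ?thesis
    using tree_of_shape_in_lang_alternation_hta by blast
qed

theorem corollary5p6:
  shows "(\<forall>A :: ('ap::finite) hta. one_way_linear A \<longrightarrow>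
            (\<exists>B :: 'ap hta. two_way_linear B \<and> lang B = lang A)) \<and>
         (\<exists>B :: 'ap hta. two_way_linear B \<and>
            (\<forall>A :: 'ap hta. one_way_linear A \<longrightarrow> lang A \<noteq> lang B))"
  using one_way_linear_two_way_linear two_way_linear_alternation_hta
    one_way_linear_lang_ne_alternation_hta
  by blast

end
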